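(* Let $\Omega\subset\mathbb{R}^d$ be an open set and let $(g^{ij})_{1\le i,j\le d}$ be a symmetric matrix of functions on $\Omega$ which is positive definite at every point of $\Omega$ and such that every entry $g^{ij}$ is a polynomial in $(x_1,\dots,x_d)$ of degree at most $2$. Write $\Gamma(f,g)=\sum_{i,j} g^{ij}\partial_i f\,\partial_j g$. Let $P_1,\dots,P_n$ be polynomials which are positive on $\Omega$ and such that for every $r\in\{1,\dots,n\}$ and every $i\in\{1,\dots,d\}$, $$\Gamma(x_i,\log P_r)=\sum_{j} g^{ij}\,\partial_j \log P_r = L_{i,r},$$ where each $L_{i,r}$ is a polynomial of degree at most $1$. For $(\alpha_1,\dots,\alpha_n)\in\mathbb{R}^n$, let $\rho=P_1^{\alpha_1}\cdots P_n^{\alpha_n}$ and let $\mathcal{L}_{\alpha_1,\dots,\alpha_n}$ be the operator on smooth functions on $\Omega$ given by $$\mathcal{L}_{\alpha_1,\dots,\alpha_n} f=\frac{1}{\rho}\sum_{i,j}\partial_i\big(\rho\, g^{ij}\partial_j f\big)=\sum_{i,j}g^{ij}\partial^2_{ij}f+\sum_i b^i\partial_i f,\qquad b^i=\sum_j\big(\partial_j g^{ij}+g^{ij}\partial_j\log\rho\big).$$ Then there exist constants $c_1,\dots,c_n$ (not depending on the $\alpha$'s) such that for every $(\alpha_1,\dots,\alpha_n)$ the function $h=P_1^{-\alpha_1}\cdots P_n^{-\alpha_n}$ satisfies $$\mathcal{L}_{\alpha_1,\dots,\alpha_n}(h)=-\Big(\sum_{r}\alpha_r c_r\Big)h,$$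 and moreover the $h$-transform of $\mathcal{L}_{\alpha_1,\dots,\alpha_n}$ by $h$ equals $\mathcal{L}_{-\alpha_1,\dots,-\alpha_n}$.
   Context: $\mathcal{L}_{\alpha_1,\dots,\alpha_n}$ is the symmetric diffusion operator associated with the carré du champ $\Gamma$ and the measure $\mu_{\alpha_1,\dots,\alpha_n}$ with density $P_1^{\alpha_1}\cdots P_n^{\alpha_n}$ with respect to Lebesgue measure on $\Omega$. For a diffusion operator $\mathcal{L}$ and a positive function $h$ with $\mathcal{L}(h)=\lambda h$ for a constant $\lambda$, the $h$-transform of $\mathcal{L}$ is the operator $\mathcal{L}^{(h)}(f)=\frac{1}{h}\mathcal{L}(hf)-\lambda f$ (equivalently $\mathcal{L}^{(h)}f=\mathcal{L}f+2\Gamma(\log h,f)$). *)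

theory Defs
  imports "HOL-Analysis.Analysis"
begin

definition pd :: "'d::finite \<Rightarrow> (real^'d \<Rightarrow> real) \<Rightarrow> real^'d \<Rightarrow> real" where
  "pd i f x = deriv (\<lambda>t. f (x + t *\<^sub>R axis i 1)) 0"

fun iter_pd :: "'d::finite list \<Rightarrow> (real^'d \<Rightarrow> real) \<Rightarrow> real^'d \<Rightarrow> real" where
  "iter_pd [] f = f"
| "iter_pd (i # is) f = pd i (iter_pd is f)"

definition smooth_on :: "(real^'d::finite) set \<Rightarrow> (real^'d \<Rightarrow> real) \<Rightarrow> bool" where
  "smooth_on \<Omega> f \<longleftrightarrow> (\<forall>is. iter_pd is f differentiable_on \<Omega>)"

inductive_set poly_fun :: "(real^'d::finite \<Rightarrow> real) set" where
  const: "(\<lambda>x. c) \<in> poly_fun"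
| coord: "(\<lambda>x. x $ k) \<in> poly_fun"
| add: "p \<in> poly_fun \<Longrightarrow> q \<in> poly_fun \<Longrightarrow> (\<lambda>x. p x + q x) \<in> poly_fun"
| mult: "p \<in> poly_fun \<Longrightarrow> q \<in> poly_fun \<Longrightarrow> (\<lambda>x. p x * q x) \<in> poly_fun"

definition poly_deg_le1 :: "(real^'d::finite \<Rightarrow> real) \<Rightarrow> bool" where
  "poly_deg_le1 p \<longleftrightarrow> (\<exists>a b. p = (\<lambda>x. a + (\<Sum>k\<in>UNIV. b k * x $ k)))"

definition poly_deg_le2 :: "(real^'d::finite \<Rightarrow> real) \<Rightarrow> bool" where
  "poly_deg_le2 p \<longleftrightarrow> (\<exists>a b c. p = (\<lambda>x. a + (\<Sum>k\<in>UNIV. b k * x $ k)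
        + (\<Sum>k\<in>UNIV. \<Sum>l\<in>UNIV. c k l * x $ k * x $ l)))"

definition Gamma :: "('d::finite \<Rightarrow> 'd \<Rightarrow> real^'d \<Rightarrow> real) \<Rightarrow> (real^'d \<Rightarrow> real)
    \<Rightarrow> (real^'d \<Rightarrow> real) \<Rightarrow> real^'d \<Rightarrow> real" where
  "Gamma g f1 f2 x = (\<Sum>i\<in>UNIV. \<Sum>j\<in>UNIV. g i j x * pd i f1 x * pd j f2 x)"

definition dens :: "nat \<Rightarrow> (nat \<Rightarrow> real^'d::finite \<Rightarrow> real) \<Rightarrow> (nat \<Rightarrow> real) \<Rightarrow> real^'d \<Rightarrow> real" where
  "dens n P \<alpha> x = (\<Prod>r<n. P r x powr \<alpha> r)"

definition Lop :: "('d::finite \<Rightarrow> 'd \<Rightarrow> real^'d \<Rightarrow> real) \<Rightarrow> nat \<Rightarrow> (nat \<Rightarrow> real^'d \<Rightarrow> real)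
    \<Rightarrow> (nat \<Rightarrow> real) \<Rightarrow> (real^'d \<Rightarrow> real) \<Rightarrow> real^'d \<Rightarrow> real" where
  "Lop g n P \<alpha> f x =
     (\<Sum>i\<in>UNIV. \<Sum>j\<in>UNIV. g i j x * pd i (pd j f) x)
   + (\<Sum>i\<in>UNIV. (\<Sum>j\<in>UNIV. pd j (g i j) x + g i j x * pd j (\<lambda>y. ln (dens n P \<alpha> y)) x) * pd i f x)"

end

theory Submission
  imports Defs
begin

text \<open>Write \<open>\<phi> = log \<rho> = \<Sum>_r \<alpha>_r log P_r\<close>, so that \<open>L_\<alpha> f = e^{-\<phi>} div (e^\<phi> g \<nabla>f)\<close>
  and \<open>h = e^{-\<phi>}\<close>. Then \<open>e^\<phi> g \<nabla>h = - g \<nabla>\<phi>\<close>, hence \<open>L_\<alpha> h = - div (g \<nabla>\<phi>) h\<close>.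
  The components of \<open>g \<nabla>\<phi>\<close> are \<open>\<Sum>_r \<alpha>_r \<Gamma>(x_i, log P_r) = \<Sum>_r \<alpha>_r L_{i,r}\<close>, which are affine,
  so this divergence is the constant \<open>\<Sum>_r \<alpha>_r c_r\<close> with \<open>c_r = \<Sum>_i \<partial>_i L_{i,r}\<close>.
  For the \<open>h\<close>-transform, the Leibniz rule \<open>L(hf) = f Lh + h Lf + 2 \<Gamma>(h,f)\<close> together with
  \<open>\<Gamma>(h,f) = - h \<Gamma>(\<phi>,f)\<close> shows that \<open>(1/h) L(hf) - \<lambda> f\<close> is the operator with drift
  \<open>g \<nabla>\<phi>\<close> replaced by \<open>- g \<nabla>\<phi>\<close>, which is \<open>L_{-\<alpha>}\<close>.\<close>

section \<open>Partial derivatives\<close>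

lemma pd_has_derivative:
  assumes "(f has_derivative D) (at x)"
  shows "pd i f x = D (axis i 1)"
proof -
  have "((\<lambda>t::real. x + t *\<^sub>R axis i 1) has_derivative (\<lambda>t. t *\<^sub>R axis i 1)) (at 0)"
    by (auto intro!: derivative_eq_intros)
  from diff_chain_at[OF this] assms
  have "((\<lambda>t. f (x + t *\<^sub>R axis i 1)) has_derivative (\<lambda>t. D (t *\<^sub>R axis i 1))) (at 0)"
    by (simp add: o_def)
  moreover have "(\<lambda>t. D (t *\<^sub>R axis i 1)) = (*) (D (axis i 1))"
    using has_derivative_linear[OF assms] by (auto simp: linear_scale)
  ultimately show ?thesis
    unfolding pd_def by (intro DERIV_imp_deriv) (simp add: has_field_derivative_def)
qed

lemma pd_cong:
  assumes "open S" "x \<in> S" "\<And>y. y \<in> S \<Longrightarrow> f y = g y"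
  shows "pd i f x = pd i g x"
proof -
  obtain e where e: "e > 0" "ball x e \<subseteq> S" using assms(1,2) open_contains_ball by blast
  have "\<forall>\<^sub>F t in nhds 0. f (x + t *\<^sub>R axis i 1) = g (x + t *\<^sub>R axis i 1)"
    unfolding eventually_nhds_metric
    using e assms(3) by (intro exI[of _ e]) (auto simp: dist_norm subset_iff)
  then show ?thesis unfolding pd_def by (rule deriv_cong_ev) simp
qed

lemma differentiable_transform_open:
  assumes "open S" "x \<in> S" "\<And>y. y \<in> S \<Longrightarrow> f y = g y" "g differentiable at x"
  shows "f differentiable at x"
  using assms has_derivative_transform_within_open[of g _ x UNIV S f]
  unfolding differentiable_def by metis

lemma differentiable_at_exp:
  fixes f :: "real^'d::finite \<Rightarrow> real"
  assumes "f differentiable at x"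
  shows "(\<lambda>y. exp (f y)) differentiable at x"
proof -
  obtain D where "(f has_derivative D) (at x)"
    using assms unfolding differentiable_def by blast
  from has_derivative_exp[OF this] show ?thesis unfolding differentiable_def by blast
qed

lemma differentiable_at_ln:
  fixes f :: "real^'d::finite \<Rightarrow> real"
  assumes "f differentiable at x" "f x > 0"
  shows "(\<lambda>y. ln (f y)) differentiable at x"
proof -
  obtain D where "(f has_derivative D) (at x)"
    using assms unfolding differentiable_def by blast
  from has_derivative_ln[OF assms(2) this] show ?thesis unfolding differentiable_def by blast
qed

lemma differentiable_coord: "(\<lambda>x::real^'d::finite. x $ k) differentiable at z"
  by (rule bounded_linear_imp_differentiable[OF bounded_linear_vec_nth])

lemma pd_const [simp]: "pd i (\<lambda>y. c) x = 0"
  by (simp add: pd_has_derivative[OF has_derivative_const])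

lemma pd_coord: "pd i (\<lambda>y. y $ k) x = (if i = k then 1 else 0)"
  by (simp add: pd_has_derivative[OF bounded_linear_imp_has_derivative[OF bounded_linear_vec_nth]]
      axis_def eq_commute)

lemma pd_add:
  assumes "f differentiable at x" "g differentiable at x"
  shows "pd i (\<lambda>y. f y + g y) x = pd i f x + pd i g x"
proof -
  obtain Df Dg where "(f has_derivative Df) (at x)" "(g has_derivative Dg) (at x)"
    using assms unfolding differentiable_def by blast
  then show ?thesis
    by (simp add: pd_has_derivative pd_has_derivative[OF has_derivative_add])
qed

lemma pd_mult:
  assumes "f differentiable at x" "g differentiable at x"
  shows "pd i (\<lambda>y. f y * g y) x = pd i f x * g x + f x * pd i g x"
proof -
  obtain Df Dg where "(f has_derivative Df) (at x)" "(g has_derivative Dg) (at x)"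
    using assms unfolding differentiable_def by blast
  then show ?thesis
    by (simp add: pd_has_derivative pd_has_derivative[OF has_derivative_mult])
qed

lemma pd_minus:
  assumes "f differentiable at x"
  shows "pd i (\<lambda>y. - f y) x = - pd i f x"
proof -
  obtain Df where "(f has_derivative Df) (at x)"
    using assms unfolding differentiable_def by blast
  then show ?thesis by (simp add: pd_has_derivative pd_has_derivative[OF has_derivative_minus])
qed

lemma pd_cmult:
  "f differentiable at x \<Longrightarrow> pd i (\<lambda>y. c * f y) x = c * pd i f x"
  using pd_mult[OF differentiable_const] by simp

lemma pd_sum:
  assumes "finite A" "\<And>a. a \<in> A \<Longrightarrow> f a differentiable at x"
  shows "pd i (\<lambda>y. \<Sum>a\<in>A. f a y) x = (\<Sum>a\<in>A. pd i (f a) x)"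
  using assms
proof (induction A rule: finite_induct)
  case (insert a A)
  then show ?case by (simp add: pd_add differentiable_sum)
qed simp

lemma pd_exp:
  assumes "f differentiable at x"
  shows "pd i (\<lambda>y. exp (f y)) x = exp (f x) * pd i f x"
proof -
  obtain Df where "(f has_derivative Df) (at x)"
    using assms unfolding differentiable_def by blast
  then show ?thesis by (simp add: pd_has_derivative pd_has_derivative[OF has_derivative_exp])
qed

lemma pd_ln:
  assumes "f differentiable at x" "f x > 0"
  shows "pd i (\<lambda>y. ln (f y)) x = pd i f x / f x"
proof -
  obtain Df where Df: "(f has_derivative Df) (at x)"
    using assms unfolding differentiable_def by blast
  then show ?thesis
    by (simp add: pd_has_derivative pd_has_derivative[OF has_derivative_ln[OF assms(2) Df]]
        divide_inverse mult.commute)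
qed

definition twice_pd_differentiable_on :: "(real^'d::finite) set \<Rightarrow> (real^'d \<Rightarrow> real) \<Rightarrow> bool"
  where "twice_pd_differentiable_on S f \<longleftrightarrow>
    (\<forall>y\<in>S. f differentiable at y \<and> (\<forall>j. pd j f differentiable at y))"

lemma smooth_on_imp_twice_pd_differentiable_on:
  assumes "open \<Omega>" "smooth_on \<Omega> f"
  shows "twice_pd_differentiable_on \<Omega> f"
proof -
  have "f differentiable_on \<Omega>" "pd j f differentiable_on \<Omega>" for j
    using assms(2) iter_pd.simps unfolding smooth_on_def by metis+
  then show ?thesis
    using assms(1) by (simp add: twice_pd_differentiable_on_def differentiable_on_eq_differentiable_at)
qed

lemma pd_exp_neg:
  "f differentiable at y \<Longrightarrow> pd j (\<lambda>y. exp (- f y)) y = - pd j f y * exp (- f y)"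
  by (simp add: pd_exp pd_minus differentiable_minus)

lemma twice_pd_differentiable_on_exp_neg:
  assumes "open \<Omega>" "twice_pd_differentiable_on \<Omega> f"
  shows "twice_pd_differentiable_on \<Omega> (\<lambda>y. exp (- f y))"
  unfolding twice_pd_differentiable_on_def
proof (intro ballI conjI allI)
  fix y j assume "y \<in> \<Omega>"
  with assms show "(\<lambda>y. exp (- f y)) differentiable at y"
    by (simp add: twice_pd_differentiable_on_def differentiable_at_exp differentiable_minus)
  show "pd j (\<lambda>y. exp (- f y)) differentiable at y"
    using assms \<open>y \<in> \<Omega>\<close> unfolding twice_pd_differentiable_on_def
    by (intro differentiable_transform_open[OF assms(1) \<open>y \<in> \<Omega>\<close> pd_exp_neg])
       (auto intro!: differentiable_mult differentiable_minus differentiable_at_exp)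
qed

section \<open>Polynomial functions\<close>

lemma poly_fun_differentiable_pd:
  "p \<in> poly_fun \<Longrightarrow> (\<forall>x. p differentiable at x) \<and> (\<forall>j. pd j p \<in> poly_fun)"
proof (induction rule: poly_fun.induct)
  case (const c)
  then show ?case by (simp add: poly_fun.const)
next
  case (coord k)
  have "pd j (\<lambda>x. x $ k) = (\<lambda>x. if j = k then 1 else 0)" for j
    by (simp add: fun_eq_iff pd_coord)
  then show ?case by (simp add: differentiable_coord poly_fun.const)
next
  case (add p q)
  then have "pd j (\<lambda>x. p x + q x) = (\<lambda>x. pd j p x + pd j q x)" for j
    by (simp add: fun_eq_iff pd_add)
  with add show ?case by (simp add: poly_fun.add)
next
  case (mult p q)
  then have "pd j (\<lambda>x. p x * q x) = (\<lambda>x. pd j p x * q x + p x * pd j q x)" for j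
    by (simp add: fun_eq_iff pd_mult)
  with mult show ?case by (simp add: poly_fun.add poly_fun.mult)
qed

lemma poly_fun_differentiable: "p \<in> poly_fun \<Longrightarrow> p differentiable at x"
  using poly_fun_differentiable_pd by blast

lemma poly_fun_pd: "p \<in> poly_fun \<Longrightarrow> pd j p \<in> poly_fun"
  using poly_fun_differentiable_pd by blast

lemma poly_fun_sum:
  "finite A \<Longrightarrow> (\<And>a. a \<in> A \<Longrightarrow> f a \<in> poly_fun) \<Longrightarrow> (\<lambda>x. \<Sum>a\<in>A. f a x) \<in> poly_fun"
  by (induction A rule: finite_induct) (simp_all add: poly_fun.const poly_fun.add)

lemma poly_deg_le2_imp_poly_fun: "poly_deg_le2 p \<Longrightarrow> p \<in> poly_fun"
  unfolding poly_deg_le2_def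
  by (auto intro!: poly_fun.add poly_fun_sum poly_fun.mult poly_fun.const poly_fun.coord)

lemma poly_deg_le1_imp_poly_fun: "poly_deg_le1 p \<Longrightarrow> p \<in> poly_fun"
  unfolding poly_deg_le1_def
  by (auto intro!: poly_fun.add poly_fun_sum poly_fun.mult poly_fun.const poly_fun.coord)

lemma poly_deg_le1_pd_const:
  assumes "poly_deg_le1 p"
  shows "pd i p x = pd i p y"
proof -
  obtain a b where p: "p = (\<lambda>x. a + (\<Sum>k\<in>UNIV. b k * x $ k))"
    using assms unfolding poly_deg_le1_def by blast
  have "pd i p z = b i" for z
    unfolding p
    by (simp add: pd_add pd_sum pd_cmult pd_coord differentiable_coord differentiable_sum if_distrib
        cong: if_cong)
  then show ?thesis by simp
qed

section \<open>Symmetric diffusion operators\<close>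

lemma sum_swap_symmetric:
  assumes "\<And>i j. G i j = G j i"
  shows "(\<Sum>i\<in>A. \<Sum>j\<in>A. G i j * a j * b i) = (\<Sum>i\<in>A. \<Sum>j\<in>A. G i j * a i * b j)"
proof -
  have "(\<Sum>i\<in>A. \<Sum>j\<in>A. G i j * a j * b i) = (\<Sum>i\<in>A. \<Sum>j\<in>A. G j i * a i * b j)"
    by (rule sum.swap)
  also have "\<dots> = (\<Sum>i\<in>A. \<Sum>j\<in>A. G i j * a i * b j)"
    using assms by (intro sum.cong refl) metis
  finally show ?thesis .
qed

text \<open>\<open>sym_diffusion_op g \<phi> f = e^{-\<phi>} \<Sum>_{i,j} \<partial>_i (e^\<phi> g^{ij} \<partial>_j f)\<close>, the diffusion operator
  that is symmetric with respect to the measure \<open>e^\<phi> dx\<close>.\<close>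

definition sym_diffusion_op :: "('d::finite \<Rightarrow> 'd \<Rightarrow> real^'d \<Rightarrow> real) \<Rightarrow> (real^'d \<Rightarrow> real)
    \<Rightarrow> (real^'d \<Rightarrow> real) \<Rightarrow> real^'d \<Rightarrow> real"
  where "sym_diffusion_op g \<phi> f x =
    (\<Sum>i\<in>UNIV. \<Sum>j\<in>UNIV. g i j x * pd i (pd j f) x)
  + (\<Sum>i\<in>UNIV. (\<Sum>j\<in>UNIV. pd j (g i j) x + g i j x * pd j \<phi> x) * pd i f x)"

lemma Lop_eq_sym_diffusion_op: "Lop g n P \<alpha> = sym_diffusion_op g (\<lambda>y. ln (dens n P \<alpha> y))"
  by (simp add: fun_eq_iff Lop_def sym_diffusion_op_def)

lemma sym_diffusion_op_cong:
  assumes "open \<Omega>" "x \<in> \<Omega>" "\<And>y. y \<in> \<Omega> \<Longrightarrow> \<phi> y = \<psi> y" "\<And>y. y \<in> \<Omega> \<Longrightarrow> f y = f' y"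
  shows "sym_diffusion_op g \<phi> f x = sym_diffusion_op g \<psi> f' x"
proof -
  have pd1: "pd j f y = pd j f' y" if "y \<in> \<Omega>" for j y
    using pd_cong[OF assms(1) that assms(4)] .
  have "pd i (pd j f) x = pd i (pd j f') x" for i j
    by (rule pd_cong[OF assms(1,2)]) (rule pd1)
  moreover have "pd j \<phi> x = pd j \<psi> x" for j
    by (rule pd_cong[OF assms(1,2)]) (rule assms(3))
  ultimately show ?thesis
    unfolding sym_diffusion_op_def by (simp only: pd1[OF assms(2)])
qed

lemma sym_diffusion_op_mult:
  assumes "open \<Omega>" "x \<in> \<Omega>" "\<And>i j. g i j x = g j i x"
    and h: "twice_pd_differentiable_on \<Omega> h" and f: "twice_pd_differentiable_on \<Omega> f"
  shows "sym_diffusion_op g \<phi> (\<lambda>y. h y * f y) x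
    = f x * sym_diffusion_op g \<phi> h x + h x * sym_diffusion_op g \<phi> f x + 2 * Gamma g h f x"
proof -
  have pd1: "pd j (\<lambda>y. h y * f y) y = pd j h y * f y + h y * pd j f y" if "y \<in> \<Omega>" for j y
    using h f that by (simp add: twice_pd_differentiable_on_def pd_mult)
  have pd2: "pd i (pd j (\<lambda>y. h y * f y)) x
    = pd i (pd j h) x * f x + pd j h x * pd i f x + (pd i h x * pd j f x + h x * pd i (pd j f) x)"
    for i j
  proof -
    have "pd i (pd j (\<lambda>y. h y * f y)) x = pd i (\<lambda>y. pd j h y * f y + h y * pd j f y) x"
      by (rule pd_cong[OF assms(1,2)]) (rule pd1)
    then show ?thesis
      using h f assms(2)
      by (simp add: twice_pd_differentiable_on_def pd_add pd_mult differentiable_mult)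
  qed
  have "(\<Sum>i\<in>UNIV. \<Sum>j\<in>UNIV. g i j x * pd j h x * pd i f x)
      = (\<Sum>i\<in>UNIV. \<Sum>j\<in>UNIV. g i j x * pd i h x * pd j f x)"
    by (rule sum_swap_symmetric) (rule assms(3))
  moreover have "(\<Sum>i\<in>UNIV. \<Sum>j\<in>UNIV. g i j x * (pd i (pd j h) x * f x + pd j h x * pd i f x
        + (pd i h x * pd j f x + h x * pd i (pd j f) x)))
      = f x * (\<Sum>i\<in>UNIV. \<Sum>j\<in>UNIV. g i j x * pd i (pd j h) x)
        + h x * (\<Sum>i\<in>UNIV. \<Sum>j\<in>UNIV. g i j x * pd i (pd j f) x)
        + (\<Sum>i\<in>UNIV. \<Sum>j\<in>UNIV. g i j x * pd j h x * pd i f x)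
        + (\<Sum>i\<in>UNIV. \<Sum>j\<in>UNIV. g i j x * pd i h x * pd j f x)"
    by (simp add: sum.distrib sum_distrib_left algebra_simps)
  moreover have "(\<Sum>i\<in>UNIV. b i * (pd i h x * f x + h x * pd i f x))
      = f x * (\<Sum>i\<in>UNIV. b i * pd i h x) + h x * (\<Sum>i\<in>UNIV. b i * pd i f x)" for b
    by (simp add: sum.distrib sum_distrib_left algebra_simps)
  ultimately show ?thesis
    unfolding sym_diffusion_op_def Gamma_def pd2 using h f assms(2)
    by (simp add: twice_pd_differentiable_on_def pd_mult distrib_left)
qed

lemma sym_diffusion_op_uminus:
  assumes "\<phi> differentiable at x" "\<And>i j. g i j x = g j i x"
  shows "sym_diffusion_op g (\<lambda>y. - \<phi> y) f x = sym_diffusion_op g \<phi> f x - 2 * Gamma g \<phi> f x"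
proof -
  have "(\<Sum>i\<in>UNIV. \<Sum>j\<in>UNIV. g i j x * pd j \<phi> x * pd i f x)
      = (\<Sum>i\<in>UNIV. \<Sum>j\<in>UNIV. g i j x * pd i \<phi> x * pd j f x)"
    by (rule sum_swap_symmetric) (rule assms(2))
  then show ?thesis
    unfolding sym_diffusion_op_def Gamma_def pd_minus[OF assms(1)]
    by (simp add: sum_subtractf sum.distrib sum_distrib_left sum_distrib_right algebra_simps)
qed

lemma Gamma_exp_neg:
  "\<phi> differentiable at x \<Longrightarrow> Gamma g (\<lambda>y. exp (- \<phi> y)) f x = - exp (- \<phi> x) * Gamma g \<phi> f x"
  by (simp add: Gamma_def pd_exp_neg sum_distrib_left algebra_simps)

lemma Gamma_coord: "Gamma g (\<lambda>y. y $ i) f x = (\<Sum>j\<in>UNIV. g i j x * pd j f x)"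
proof -
  have "Gamma g (\<lambda>y. y $ i) f x = (\<Sum>k\<in>UNIV. if k = i then \<Sum>j\<in>UNIV. g i j x * pd j f x else 0)"
    unfolding Gamma_def by (intro sum.cong) (simp_all add: pd_coord)
  then show ?thesis by simp
qed

lemma sym_diffusion_op_exp_neg:
  assumes "open \<Omega>" "x \<in> \<Omega>" and sym: "\<And>i j y. y \<in> \<Omega> \<Longrightarrow> g i j y = g j i y"
    and g: "\<And>i j. g i j differentiable at x" and \<phi>: "twice_pd_differentiable_on \<Omega> \<phi>"
  shows "sym_diffusion_op g \<phi> (\<lambda>y. exp (- \<phi> y)) x
    = - (\<Sum>i\<in>UNIV. pd i (\<lambda>y. \<Sum>j\<in>UNIV. g i j y * pd j \<phi> y) x) * exp (- \<phi> x)"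
proof -
  have pd1: "pd j (\<lambda>y. exp (- \<phi> y)) y = - pd j \<phi> y * exp (- \<phi> y)" if "y \<in> \<Omega>" for j y
    using \<phi> that by (simp add: twice_pd_differentiable_on_def pd_exp_neg)
  have pd2: "pd i (pd j (\<lambda>y. exp (- \<phi> y))) x
    = (- pd i (pd j \<phi>) x + pd j \<phi> x * pd i \<phi> x) * exp (- \<phi> x)" for i j
  proof -
    have "pd i (pd j (\<lambda>y. exp (- \<phi> y))) x = pd i (\<lambda>y. - pd j \<phi> y * exp (- \<phi> y)) x"
      by (rule pd_cong[OF assms(1,2)]) (rule pd1)
    then show ?thesis
      using \<phi> assms(2)
      by (simp add: twice_pd_differentiable_on_def pd_mult pd_minus pd_exp_neg differentiable_minus
          differentiable_at_exp algebra_simps)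
  qed
  \<comment> \<open>differentiating the symmetry needs it on a neighbourhood of \<open>x\<close>, not only at \<open>x\<close>\<close>
  have pd_g_sym: "pd i (g i j) x = pd i (g j i) x" for i j
    by (rule pd_cong[OF assms(1,2)]) (rule sym)
  have "(\<Sum>i\<in>UNIV. \<Sum>j\<in>UNIV. pd i (g i j) x * pd j \<phi> x)
      = (\<Sum>i\<in>UNIV. \<Sum>j\<in>UNIV. pd i (g j i) x * pd j \<phi> x)"
    by (intro sum.cong refl) (metis pd_g_sym)
  also have "\<dots> = (\<Sum>i\<in>UNIV. \<Sum>j\<in>UNIV. pd j (g i j) x * pd i \<phi> x)"
    by (rule sum.swap)
  finally have div: "(\<Sum>i\<in>UNIV. pd i (\<lambda>y. \<Sum>j\<in>UNIV. g i j y * pd j \<phi> y) x)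
      = (\<Sum>i\<in>UNIV. \<Sum>j\<in>UNIV. pd j (g i j) x * pd i \<phi> x + g i j x * pd i (pd j \<phi>) x)"
    using g \<phi> assms(2)
    by (simp add: twice_pd_differentiable_on_def pd_sum pd_mult differentiable_mult sum.distrib)
  have "sym_diffusion_op g \<phi> (\<lambda>y. exp (- \<phi> y)) x
      = (\<Sum>i\<in>UNIV. \<Sum>j\<in>UNIV. g i j x * ((- pd i (pd j \<phi>) x + pd j \<phi> x * pd i \<phi> x) * exp (- \<phi> x))
          + (pd j (g i j) x + g i j x * pd j \<phi> x) * (- pd i \<phi> x * exp (- \<phi> x)))"
    unfolding sym_diffusion_op_def pd2 pd1[OF assms(2)]
    by (simp only: sum_distrib_right flip: sum.distrib)
  also have "\<dots> = (\<Sum>i\<in>UNIV. \<Sum>j\<in>UNIV.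
      - ((pd j (g i j) x * pd i \<phi> x + g i j x * pd i (pd j \<phi>) x) * exp (- \<phi> x)))"
    by (intro sum.cong refl) (simp add: algebra_simps)
  finally show ?thesis
    by (simp only: div sum_distrib_right sum_negf flip: minus_mult_left)
qed

lemma sym_diffusion_op_h_transform:
  assumes "open \<Omega>" "x \<in> \<Omega>" "\<And>i j. g i j x = g j i x"
    and \<phi>: "twice_pd_differentiable_on \<Omega> \<phi>" and f: "twice_pd_differentiable_on \<Omega> f"
    and eigen: "sym_diffusion_op g \<phi> (\<lambda>y. exp (- \<phi> y)) x = lam * exp (- \<phi> x)"
  shows "1 / exp (- \<phi> x) * sym_diffusion_op g \<phi> (\<lambda>y. exp (- \<phi> y) * f y) x - lam * f x
    = sym_diffusion_op g (\<lambda>y. - \<phi> y) f x"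
proof -
  have "\<phi> differentiable at x"
    using \<phi> assms(2) by (simp add: twice_pd_differentiable_on_def)
  then show ?thesis
    using sym_diffusion_op_mult[where g=g and \<phi>=\<phi>, OF assms(1-3)
        twice_pd_differentiable_on_exp_neg[OF assms(1) \<phi>] f]
    by (simp add: eigen Gamma_exp_neg sym_diffusion_op_uminus assms(3) field_simps)
qed

section \<open>Densities \<open>P_1^\<alpha>_1 \<cdots> P_n^\<alpha>_n\<close>\<close>

definition log_dens :: "nat \<Rightarrow> (nat \<Rightarrow> real^'d::finite \<Rightarrow> real) \<Rightarrow> (nat \<Rightarrow> real) \<Rightarrow> real^'d \<Rightarrow> real"
  where "log_dens n P \<alpha> y = (\<Sum>r<n. \<alpha> r * ln (P r y))"

lemma log_dens_uminus: "log_dens n P (\<lambda>r. - \<alpha> r) y = - log_dens n P \<alpha> y"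
  by (simp add: log_dens_def sum_negf)

lemma dens_eq_exp_log_dens:
  assumes "\<And>r. r < n \<Longrightarrow> P r y > 0"
  shows "dens n P \<alpha> y = exp (log_dens n P \<alpha> y)"
proof -
  have "P r y \<noteq> 0" if "r < n" for r
    using assms[OF that] by simp
  then show ?thesis
    unfolding dens_def log_dens_def exp_sum[OF finite_lessThan]
    by (intro prod.cong refl) (simp add: powr_def)
qed

lemma ln_dens:
  assumes "\<And>r. r < n \<Longrightarrow> P r y > 0"
  shows "ln (dens n P \<alpha> y) = log_dens n P \<alpha> y"
  using dens_eq_exp_log_dens[of n P y \<alpha>] assms by simp

lemma pd_log_dens:
  assumes "\<And>r. r < n \<Longrightarrow> P r differentiable at y" "\<And>r. r < n \<Longrightarrow> P r y > 0"
  shows "pd j (log_dens n P \<alpha>) y = (\<Sum>r<n. \<alpha> r * (pd j (P r) y / P r y))"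
proof -
  have "pd j (log_dens n P \<alpha>) y = (\<Sum>r<n. pd j (\<lambda>y. \<alpha> r * ln (P r y)) y)"
    unfolding log_dens_def using assms
    by (intro pd_sum) (auto intro!: differentiable_mult differentiable_at_ln)
  also have "\<dots> = (\<Sum>r<n. \<alpha> r * (pd j (P r) y / P r y))"
    using assms by (intro sum.cong refl) (simp add: pd_cmult pd_ln differentiable_at_ln)
  finally show ?thesis .
qed

lemma twice_pd_differentiable_on_log_dens:
  assumes "open \<Omega>" "\<And>r. r < n \<Longrightarrow> P r \<in> poly_fun" "\<And>r y. r < n \<Longrightarrow> y \<in> \<Omega> \<Longrightarrow> P r y > 0"
  shows "twice_pd_differentiable_on \<Omega> (log_dens n P \<alpha>)"
  unfolding twice_pd_differentiable_on_def
proof (intro ballI conjI allI)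
  fix y j assume y: "y \<in> \<Omega>"
  show "log_dens n P \<alpha> differentiable at y"
    unfolding log_dens_def using assms(2,3) y
    by (intro differentiable_sum ballI differentiable_mult differentiable_const differentiable_at_ln)
      (auto intro: poly_fun_differentiable)
  show "pd j (log_dens n P \<alpha>) differentiable at y"
    using assms y
    by (intro differentiable_transform_open[OF assms(1) y pd_log_dens] differentiable_sum ballI
        differentiable_mult differentiable_const differentiable_divide)
      (auto intro: poly_fun_differentiable poly_fun_pd simp: less_imp_neq[symmetric])
qed

context
  fixes \<Omega> :: "(real^'d::finite) set" and g :: "'d \<Rightarrow> 'd \<Rightarrow> real^'d \<Rightarrow> real"
    and n :: nat and P :: "nat \<Rightarrow> real^'d \<Rightarrow> real" and L :: "nat \<Rightarrow> 'd \<Rightarrow> real^'d \<Rightarrow> real"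
  assumes open_\<Omega>: "open \<Omega>"
    and g_sym: "\<And>i j x. x \<in> \<Omega> \<Longrightarrow> g i j x = g j i x"
    and g_poly: "\<And>i j. poly_deg_le2 (g i j)"
    and P_poly: "\<And>r. r < n \<Longrightarrow> P r \<in> poly_fun"
    and P_pos: "\<And>r x. r < n \<Longrightarrow> x \<in> \<Omega> \<Longrightarrow> P r x > 0"
    and L_affine: "\<And>r i. r < n \<Longrightarrow> poly_deg_le1 (L r i)"
    and Gamma_eq_L: "\<And>r i x. r < n \<Longrightarrow> x \<in> \<Omega> \<Longrightarrow> Gamma g (\<lambda>y. y $ i) (\<lambda>y. ln (P r y)) x = L r i x"
begin

lemma divergence_log_dens:
  assumes "x \<in> \<Omega>"
  shows "(\<Sum>i\<in>UNIV. pd i (\<lambda>y. \<Sum>j\<in>UNIV. g i j y * pd j (log_dens n P \<alpha>) y) x)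
    = (\<Sum>r<n. \<alpha> r * (\<Sum>i\<in>UNIV. pd i (L r i) 0))"
proof -
  have flux: "(\<Sum>j\<in>UNIV. g i j y * pd j (log_dens n P \<alpha>) y) = (\<Sum>r<n. \<alpha> r * L r i y)"
    if "y \<in> \<Omega>" for i y
  proof -
    have "(\<Sum>j\<in>UNIV. g i j y * pd j (log_dens n P \<alpha>) y)
        = (\<Sum>r<n. \<alpha> r * (\<Sum>j\<in>UNIV. g i j y * (pd j (P r) y / P r y)))"
      using that
      by (simp add: pd_log_dens poly_fun_differentiable P_poly P_pos sum_distrib_left
          mult.left_commute sum.swap[of _ UNIV])
    also have "\<dots> = (\<Sum>r<n. \<alpha> r * L r i y)"
      using that
      by (intro sum.cong refl)
        (simp add: Gamma_eq_L[symmetric] Gamma_coord pd_ln poly_fun_differentiable P_poly P_pos)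
    finally show ?thesis .
  qed
  have L_diff: "L r i differentiable at x" if "r < n" for r i
    by (rule poly_fun_differentiable[OF poly_deg_le1_imp_poly_fun[OF L_affine[OF that]]])
  have "pd i (\<lambda>y. \<Sum>j\<in>UNIV. g i j y * pd j (log_dens n P \<alpha>) y) x
      = (\<Sum>r<n. \<alpha> r * pd i (L r i) 0)" for i
  proof -
    have "pd i (\<lambda>y. \<Sum>j\<in>UNIV. g i j y * pd j (log_dens n P \<alpha>) y) x
        = pd i (\<lambda>y. \<Sum>r<n. \<alpha> r * L r i y) x"
      by (rule pd_cong[OF open_\<Omega> assms]) (rule flux)
    also have "\<dots> = (\<Sum>r<n. pd i (\<lambda>y. \<alpha> r * L r i y) x)"
      by (rule pd_sum) (simp_all add: differentiable_mult L_diff)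
    also have "\<dots> = (\<Sum>r<n. \<alpha> r * pd i (L r i) x)"
      by (intro sum.cong refl) (simp add: pd_cmult L_diff)
    also have "\<dots> = (\<Sum>r<n. \<alpha> r * pd i (L r i) 0)"
      by (intro sum.cong refl) (simp add: poly_deg_le1_pd_const[OF L_affine, where x=x and y=0])
    finally show ?thesis .
  qed
  then show ?thesis
    by (simp add: sum_distrib_left sum.swap[of _ UNIV])
qed

lemma sym_diffusion_op_exp_neg_log_dens:
  assumes "x \<in> \<Omega>"
  shows "sym_diffusion_op g (log_dens n P \<alpha>) (\<lambda>y. exp (- log_dens n P \<alpha> y)) x
    = - (\<Sum>r<n. \<alpha> r * (\<Sum>i\<in>UNIV. pd i (L r i) 0)) * exp (- log_dens n P \<alpha> x)"
  using sym_diffusion_op_exp_neg[OF open_\<Omega> assms g_sym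
      poly_fun_differentiable[OF poly_deg_le2_imp_poly_fun[OF g_poly]]
      twice_pd_differentiable_on_log_dens[OF open_\<Omega> P_poly P_pos]]
  by (simp add: divergence_log_dens[OF assms])

lemma Lop_dens_uminus:
  assumes "x \<in> \<Omega>"
  shows "Lop g n P \<alpha> (dens n P (\<lambda>r. - \<alpha> r)) x
    = - (\<Sum>r<n. \<alpha> r * (\<Sum>i\<in>UNIV. pd i (L r i) 0)) * dens n P (\<lambda>r. - \<alpha> r) x"
proof -
  have "Lop g n P \<alpha> (dens n P (\<lambda>r. - \<alpha> r)) x
      = sym_diffusion_op g (log_dens n P \<alpha>) (\<lambda>y. exp (- log_dens n P \<alpha> y)) x"
    unfolding Lop_eq_sym_diffusion_op
    by (rule sym_diffusion_op_cong[OF open_\<Omega> assms])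
      (simp_all add: P_pos ln_dens dens_eq_exp_log_dens log_dens_uminus)
  then show ?thesis
    using assms
    by (simp add: sym_diffusion_op_exp_neg_log_dens P_pos dens_eq_exp_log_dens log_dens_uminus)
qed

lemma Lop_h_transform:
  assumes "x \<in> \<Omega>" "smooth_on \<Omega> f"
  shows "1 / dens n P (\<lambda>r. - \<alpha> r) x * Lop g n P \<alpha> (\<lambda>y. dens n P (\<lambda>r. - \<alpha> r) y * f y) x
      + (\<Sum>r<n. \<alpha> r * (\<Sum>i\<in>UNIV. pd i (L r i) 0)) * f x
    = Lop g n P (\<lambda>r. - \<alpha> r) f x"
proof -
  have "Lop g n P \<alpha> (\<lambda>y. dens n P (\<lambda>r. - \<alpha> r) y * f y) x
      = sym_diffusion_op g (log_dens n P \<alpha>) (\<lambda>y. exp (- log_dens n P \<alpha> y) * f y) x"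
    unfolding Lop_eq_sym_diffusion_op
    by (rule sym_diffusion_op_cong[OF open_\<Omega> assms(1)])
      (simp_all add: P_pos ln_dens dens_eq_exp_log_dens log_dens_uminus)
  moreover have "Lop g n P (\<lambda>r. - \<alpha> r) f x
      = sym_diffusion_op g (\<lambda>y. - log_dens n P \<alpha> y) f x"
    unfolding Lop_eq_sym_diffusion_op
    by (rule sym_diffusion_op_cong[OF open_\<Omega> assms(1)])
      (simp_all add: P_pos ln_dens log_dens_uminus)
  ultimately show ?thesis
    using sym_diffusion_op_h_transform[OF open_\<Omega> assms(1) g_sym[OF assms(1)]
        twice_pd_differentiable_on_log_dens[OF open_\<Omega> P_poly P_pos]
        smooth_on_imp_twice_pd_differentiable_on[OF open_\<Omega> assms(2)]
        sym_diffusion_op_exp_neg_log_dens[OF assms(1)]]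
    using assms(1) by (simp add: P_pos dens_eq_exp_log_dens log_dens_uminus)
qed

end

theorem theorem4p2:
  fixes \<Omega> :: "(real^'d::finite) set"
    and g :: "'d \<Rightarrow> 'd \<Rightarrow> real^'d \<Rightarrow> real"
    and n :: nat
    and P :: "nat \<Rightarrow> real^'d \<Rightarrow> real"
  assumes "open \<Omega>"
    and "\<And>i j x. x \<in> \<Omega> \<Longrightarrow> g i j x = g j i x"
    and "\<And>x v. x \<in> \<Omega> \<Longrightarrow> v \<noteq> 0 \<Longrightarrow> (\<Sum>i\<in>UNIV. \<Sum>j\<in>UNIV. g i j x * v $ i * v $ j) > 0"
    and "\<And>i j. poly_deg_le2 (g i j)"
    and "\<And>r. r < n \<Longrightarrow> P r \<in> poly_fun"
    and "\<And>r x. r < n \<Longrightarrow> x \<in> \<Omega> \<Longrightarrow> P r x > 0"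
    and "\<And>r i. r < n \<Longrightarrow> \<exists>L. poly_deg_le1 L \<and>
            (\<forall>x\<in>\<Omega>. Gamma g (\<lambda>y. y $ i) (\<lambda>y. ln (P r y)) x = L x)"
  shows "\<exists>c :: nat \<Rightarrow> real. \<forall>\<alpha> :: nat \<Rightarrow> real.
     let h = dens n P (\<lambda>r. - \<alpha> r); lam = - (\<Sum>r<n. \<alpha> r * c r) in
       (\<forall>x\<in>\<Omega>. Lop g n P \<alpha> h x = lam * h x) \<and>
       (\<forall>f. smooth_on \<Omega> f \<longrightarrow>
          (\<forall>x\<in>\<Omega>. (1 / h x) * Lop g n P \<alpha> (\<lambda>y. h y * f y) x - lam * f x
                   = Lop g n P (\<lambda>r. - \<alpha> r) f x))"
proof -
  have "\<forall>r. \<exists>Lr. \<forall>i. r < n \<longrightarrow>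
      poly_deg_le1 (Lr i) \<and> (\<forall>x\<in>\<Omega>. Gamma g (\<lambda>y. y $ i) (\<lambda>y. ln (P r y)) x = Lr i x)"
    using assms(7) by (intro allI choice) blast
  then obtain L where L: "\<And>r i. r < n \<Longrightarrow> poly_deg_le1 (L r i)"
    "\<And>r i x. r < n \<Longrightarrow> x \<in> \<Omega> \<Longrightarrow> Gamma g (\<lambda>y. y $ i) (\<lambda>y. ln (P r y)) x = L r i x"
    by (metis choice)
  note eigen = Lop_dens_uminus[where n=n and P=P, OF assms(1,2,4,5,6) L]
  note h_transform = Lop_h_transform[where n=n and P=P, OF assms(1,2,4,5,6) L]
  show ?thesis
    using eigen h_transform by (intro exI[of _ "\<lambda>r. \<Sum>i\<in>UNIV. pd i (L r i) 0"]) (simp add: Let_def)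
qed

end
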